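(* Consider the following setup. Let $K<\infty$ and, for $i=1,\ldots,K$, let $\{T^{(i)}_{n_i}\}$ be a sequence of test statistics for testing $H_0^{(i)}:\theta_i\in\Theta_0^{(i)}$ against $\theta_i\in\Theta^{(i)}\setminus\Theta_0^{(i)}$, with $p$-values $p_i=p_i^{(n_i)}$. Assume that under the null the statistics are independent for all sample sizes, and that each sequence has exact slope $c_i(\theta_i)\ge0$, i.e. $-\frac{2}{n_i}\log p_i^{(n_i)}\to c_i(\theta_i)$ with probability one as $n_i\to\infty$, with $c_i(\theta_i)=0$ for $\theta_i\in\Theta_0^{(i)}$ and $c_i(\theta_i)>0$ otherwise. Let $n=\frac1K\sum_i n_i$, $n_i/n\to\lambda_i>0$, $\sum_i\lambda_i=K$, and assume $\lambda_1c_1(\theta_1)\ge\cdots\ge\lambda_Kc_K(\theta_K)\ge0$ where $c_i(\theta_i)>0$ exactly for $1\le i\le\ell$. Let $p_{(1)}\le\cdots\le p_{(K)}$ be the ordered $p$-values and consider $$T_A=\max_{1\le j\le K}\frac{-2\sum_{i=1}^j\log p_{(i)}-A_j}{B_j},$$ where $A_j$ and $B_j>0$ are finite constants depending only on $j$ and $K$, $B_j$ is monotone increasing in $j$, and the values $\frac{\sum_{i=1}^j\lambda_ic_i(\theta_i)}{B_j}$, $j=1,\ldots,K$, have no ties. Then $T_A$ is not ABO in general: its exact slope satisfies $$C_A(\vec\theta)\le\max_{1\le j\le\ell}\frac{B_1}{B_j}\sum_{i=1}^j\lambda_ic_i(\theta_i),$$ and equality holds if and only if $\ell=1$.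
   Context: The exact slope of a combination test with $p$-value $p$ (computed from its null distribution, under which $p_1,\ldots,p_K$ are i.i.d. Unif$(0,1)$) is the function $C(\vec\theta)$ with $-\frac{2}{n}\log p\to C(\vec\theta)$ with probability one as $n\to\infty$. A combination test is asymptotically Bahadur optimal (ABO) if its exact slope equals $\sum_{i=1}^\ell\lambda_ic_i(\theta_i)$. With $A_j=2\sum_{i=1}^K w(i,j)$, $B_j=2(\sum_{i=1}^K w^2(i,j))^{1/2}$, $w(i,j)=\min\{1,j/i\}$, $T_A$ is the AFz statistic. *)

theory Defs
  imports "HOL-Probability.Probability"
begin

definition TA :: "nat \<Rightarrow> (nat \<Rightarrow> real) \<Rightarrow> (nat \<Rightarrow> real) \<Rightarrow> (nat \<Rightarrow> real) \<Rightarrow> real" where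
  "TA K A B u = Max ((\<lambda>j. (- 2 * (\<Sum>i<j. ln (sort (map u [1..<K+1]) ! i)) - A j) / B j) ` {1..K})"

definition null_pvals :: "nat \<Rightarrow> (nat \<Rightarrow> real) measure" where
  "null_pvals K = PiM {1..K} (\<lambda>_. uniform_measure lborel {0<..<1::real})"

definition TA_pvalue :: "nat \<Rightarrow> (nat \<Rightarrow> real) \<Rightarrow> (nat \<Rightarrow> real) \<Rightarrow> real \<Rightarrow> real" where
  "TA_pvalue K A B t = measure (null_pvals K) {u \<in> space (null_pvals K). TA K A B u \<ge> t}"

end

theory Submission
  imports Defs "HOL-Real_Asymp.Real_Asymp"
begin

text \<open>Under the alternative, -2 log p_i / n tends to lambda_i c_i. The sum of -2 log p over the
  j smallest p-values is the largest sum of -2 log p_i over j-element index sets, a continuous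
  function of the p-values; at the limit vector, which decreases in i, this largest sum is attained
  by the first j indices. Hence T_A / n tends to D = max_j (sum_{i<=j} lambda_i c_i) / B_j.
  Under the null, P(T_A >= t) lies between P(p_1 <= exp (-(A_1 + B_1 t) / 2)) and a Chernoff
  bound for a sum of K logarithms of uniform variables, so -2 log P(T_A >= t) / t tends to B_1,
  and the exact slope is B_1 D. The terms with j > l are dominated by the one with j = l, so
  B_1 D is the maximum over j <= l of (B_1 / B_j) sum_{i<=j} lambda_i c_i. For l >= 2 each of
  these falls short of sum_{i<=l} lambda_i c_i: it either omits lambda_l c_l or carries the
  factor B_1 / B_l < 1.\<close>

section \<open>Sums of the smallest values of a family\<close>

lemma sum_le_sum_exchange:
  fixes f :: "'a \<Rightarrow> 'b::ordered_comm_monoid_add"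
  assumes "finite A" "finite B" "card A = card B"
    and "\<And>a b. a \<in> A - B \<Longrightarrow> b \<in> B - A \<Longrightarrow> f a \<le> f b"
  shows "sum f A \<le> sum f B"
proof -
  have "card (A - B) = card (B - A)"
    using card_Diff_subset_Int[of A B] card_Diff_subset_Int[of B A] assms(1-3)
    by (simp add: Int_commute)
  then obtain g where g: "bij_betw g (A - B) (B - A)"
    using finite_same_card_bij[of "A - B" "B - A"] assms(1,2) by auto
  have "sum f (A - B) \<le> sum (\<lambda>x. f (g x)) (A - B)"
    using g assms(4) by (intro sum_mono) (auto dest: bij_betwE)
  also have "\<dots> = sum f (B - A)" using g by (rule sum.reindex_bij_betw)
  finally have diff_le: "sum f (A - B) \<le> sum f (B - A)" .
  have "sum f A = sum f (A - B) + sum f (A \<inter> B)"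
    using sum.Int_Diff[OF assms(1), of f B] by (simp add: add.commute)
  also have "\<dots> \<le> sum f (B - A) + sum f (A \<inter> B)"
    using diff_le by (rule add_right_mono)
  also have "\<dots> = sum f B"
    using sum.Int_Diff[OF assms(2), of f A] by (simp add: add.commute Int_commute)
  finally show ?thesis .
qed

lemma sorted_prefix_eq_sum_lower_subset:
  assumes "distinct xs" "j \<le> length xs"
  obtains J where "J \<subseteq> set xs" "card J = j"
    "\<And>h. (\<Sum>i<j. h (sort (map u xs) ! i)) = (\<Sum>x\<in>J. h (u x))"
    "\<And>a b. a \<in> J \<Longrightarrow> b \<in> set xs - J \<Longrightarrow> u a \<le> u b"
proof -
  define ps where "ps = sort_key u xs"
  have ps: "distinct ps" "length ps = length xs" "set ps = set xs" "sorted (map u ps)"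
    "sort (map u xs) = map u ps"
    using assms(1) unfolding ps_def by (auto intro: properties_for_sort simp: mset_map)
  show thesis
  proof (rule that[of "set (take j ps)"])
    show "set (take j ps) \<subseteq> set xs" using ps(3) by (metis set_take_subset)
    show "card (set (take j ps)) = j" using ps(1,2) assms(2) by (simp add: distinct_card)
    fix h
    have "(\<Sum>i<j. h (sort (map u xs) ! i)) = sum_list (map (h \<circ> u) (take j ps))"
      using ps(2,5) assms(2) by (simp add: sum_list_sum_nth min_def atLeast0LessThan)
    also have "\<dots> = (\<Sum>x\<in>set (take j ps). h (u x))"
      using ps(1) by (simp add: sum_list_distinct_conv_sum_set)
    finally show "(\<Sum>i<j. h (sort (map u xs) ! i)) = (\<Sum>x\<in>set (take j ps). h (u x))" .
  next
    fix a b assume a: "a \<in> set (take j ps)" and b: "b \<in> set xs - set (take j ps)"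
    have "b \<in> set (drop j ps)" using b ps(3) by (metis DiffE append_take_drop_id set_append Un_iff)
    moreover have "sorted (map u (take j ps) @ map u (drop j ps))"
      using ps(4) by (metis append_take_drop_id map_append)
    ultimately show "u a \<le> u b" using a by (auto simp: sorted_append)
  qed
qed

lemma finite_subsets_card: "finite A \<Longrightarrow> finite {J. J \<subseteq> A \<and> card J = j}"
  by (rule finite_subset[of _ "Pow A"]) auto

lemma sum_sorted_prefix_eq_Max:
  fixes h :: "'b::linorder \<Rightarrow> 'c::{ordered_comm_monoid_add, linorder}"
  assumes "distinct xs" "j \<le> length xs" "antimono_on (u ` set xs) h"
  shows "(\<Sum>i<j. h (sort (map u xs) ! i))
           = Max ((\<lambda>J. \<Sum>x\<in>J. h (u x)) ` {J. J \<subseteq> set xs \<and> card J = j})"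
proof -
  obtain J0 where J0: "J0 \<subseteq> set xs" "card J0 = j"
    "(\<Sum>i<j. h (sort (map u xs) ! i)) = (\<Sum>x\<in>J0. h (u x))"
    "\<And>a b. a \<in> J0 \<Longrightarrow> b \<in> set xs - J0 \<Longrightarrow> u a \<le> u b"
    using sorted_prefix_eq_sum_lower_subset[OF assms(1,2)] by metis
  have "(\<Sum>x\<in>J. h (u x)) \<le> (\<Sum>x\<in>J0. h (u x))" if J: "J \<subseteq> set xs" "card J = j" for J
  proof (rule sum_le_sum_exchange)
    fix a b assume "a \<in> J - J0" "b \<in> J0 - J"
    then show "h (u a) \<le> h (u b)"
      using J J0 by (intro monotone_onD[OF assms(3)]) auto
  qed (use J J0 rev_finite_subset[OF finite_set] in auto)
  then show ?thesis
    unfolding J0(3) using J0(1,2) by (intro Max_eqI[symmetric] finite_imageI finite_subsets_card) auto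
qed

lemma sort_nth_eq_Min_Max:
  fixes u :: "'a \<Rightarrow> 'b::linorder"
  assumes "distinct xs" "i < length xs"
  shows "sort (map u xs) ! i = Min ((\<lambda>J. Max (u ` J)) ` {J. J \<subseteq> set xs \<and> card J = Suc i})"
proof -
  define ps where "ps = sort_key u xs"
  have ps: "distinct ps" "length ps = length xs" "set ps = set xs" "sorted (map u ps)"
    "sort (map u xs) = map u ps"
    using assms(1) unfolding ps_def by (auto intro: properties_for_sort simp: mset_map)
  have le_nth: "u (ps ! k) \<le> u (ps ! k')" if "k \<le> k'" "k' < length xs" for k k'
    using sorted_nth_mono[OF ps(4), of k k'] that ps(2) by simp
  have "ps ! i \<in> set (take (Suc i) ps)"
    using assms(2) ps(2) by (auto simp: in_set_conv_nth intro!: exI[of _ i])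
  then have prefix_Max: "Max (u ` set (take (Suc i) ps)) = u (ps ! i)"
    using assms(2) ps(2) le_nth by (intro Max_eqI) (auto simp: in_set_conv_nth)
  have prefix_mem: "set (take (Suc i) ps) \<in> {J. J \<subseteq> set xs \<and> card J = Suc i}"
    using ps(1-3) assms(2) by (auto simp: distinct_card dest: in_set_takeD)
  have lower: "u (ps ! i) \<le> Max (u ` J)" if J: "J \<subseteq> set xs" "card J = Suc i" for J
  proof -
    have "\<not> J \<subseteq> set (take i ps)"
      using card_mono[of "set (take i ps)" J] J(2) distinct_card[of "take i ps"] ps(1) by auto
    then obtain b where b: "b \<in> J" "b \<notin> set (take i ps)" by blast
    then have "b \<in> set (drop i ps)"
      using J(1) ps(3) by (metis append_take_drop_id set_append Un_iff subsetD)
    then obtain k where k: "k < length xs - i" "b = ps ! (i + k)"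
      using ps(2) by (auto simp: in_set_conv_nth)
    then have "u (ps ! i) \<le> u b" using le_nth by simp
    also have "u b \<le> Max (u ` J)"
      using b(1) J(1) by (intro Max_ge) (auto intro: rev_finite_subset[OF finite_set])
    finally show ?thesis .
  qed
  have "sort (map u xs) ! i = u (ps ! i)" using assms(2) ps(2,5) by simp
  also have "\<dots> = Min ((\<lambda>J. Max (u ` J)) ` {J. J \<subseteq> set xs \<and> card J = Suc i})"
  proof (rule Min_eqI[symmetric])
    show "finite ((\<lambda>J. Max (u ` J)) ` {J. J \<subseteq> set xs \<and> card J = Suc i})"
      by (simp add: finite_subsets_card)
    show "u (ps ! i) \<in> (\<lambda>J. Max (u ` J)) ` {J. J \<subseteq> set xs \<and> card J = Suc i}"
      using imageI[OF prefix_mem, of "\<lambda>J. Max (u ` J)"] unfolding prefix_Max .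
  next
    fix y assume "y \<in> (\<lambda>J. Max (u ` J)) ` {J. J \<subseteq> set xs \<and> card J = Suc i}"
    then show "u (ps ! i) \<le> y" using lower by force
  qed
  finally show ?thesis .
qed

lemma sum_le_sum_sorted_prefix:
  assumes "distinct xs" "j \<le> length xs" "\<And>x. x \<in> set xs \<Longrightarrow> h (u x) \<le> (0::'c::ordered_comm_monoid_add)"
  shows "(\<Sum>x\<in>set xs. h (u x)) \<le> (\<Sum>i<j. h (sort (map u xs) ! i))"
proof -
  obtain J0 where J0: "J0 \<subseteq> set xs" "(\<Sum>i<j. h (sort (map u xs) ! i)) = (\<Sum>x\<in>J0. h (u x))"
    using sorted_prefix_eq_sum_lower_subset[OF assms(1,2)] by metis
  have "(\<Sum>x\<in>set xs. h (u x)) = (\<Sum>x\<in>set xs - J0. h (u x)) + (\<Sum>x\<in>J0. h (u x))"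
    using J0(1) by (simp add: sum.subset_diff)
  also have "\<dots> \<le> (\<Sum>x\<in>J0. h (u x))"
    using assms(3) by (intro add_decreasing sum_nonpos) auto
  finally show ?thesis unfolding J0(2) .
qed

section \<open>The statistic T_A\<close>

lemma upt_indices: "distinct [1..<K+1]" "length [1..<K+1] = K" "set [1..<K+1] = {1..K}"
  by auto

lemma TA_term_le_TA:
  assumes "j \<in> {1..K}"
  shows "(- 2 * (\<Sum>i<j. ln (sort (map u [1..<K+1]) ! i)) - A j) / B j \<le> TA K A B u"
  unfolding TA_def using assms by (intro Max_ge) auto

lemma TA_eq_term:
  assumes "1 \<le> K"
  obtains j where "j \<in> {1..K}"
    "TA K A B u = (- 2 * (\<Sum>i<j. ln (sort (map u [1..<K+1]) ! i)) - A j) / B j"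
proof -
  have "TA K A B u \<in> (\<lambda>j. (- 2 * (\<Sum>i<j. ln (sort (map u [1..<K+1]) ! i)) - A j) / B j) ` {1..K}"
    unfolding TA_def using assms by (intro Max_in) auto
  then show thesis using that by blast
qed

lemma TA_ge_smallest_first:
  assumes "1 \<le> K" "0 < B 1" "\<And>i. i \<in> {1..K} \<Longrightarrow> 0 < u i"
  shows "(- 2 * ln (u 1) - A 1) / B 1 \<le> TA K A B u"
proof -
  have "sort (map u [1..<K+1]) ! 0 = Min ((\<lambda>J. Max (u ` J)) ` {J. J \<subseteq> {1..K} \<and> card J = 1})"
    using sort_nth_eq_Min_Max[where u=u and i=0, OF upt_indices(1), unfolded upt_indices] assms(1) by simp
  also have "\<dots> \<le> Max (u ` {1})"
  proof (rule Min_le)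
    show "Max (u ` {1}) \<in> (\<lambda>J. Max (u ` J)) ` {J. J \<subseteq> {1..K} \<and> card J = 1}"
      using assms(1) by (intro imageI) auto
  qed (simp add: finite_subsets_card)
  finally have le_u1: "sort (map u [1..<K+1]) ! 0 \<le> u 1" by simp
  have "sort (map u [1..<K+1]) ! 0 \<in> u ` {1..K}"
    using nth_mem[of 0 "sort (map u [1..<K+1])"] assms(1)
    by (simp del: upt_Suc add: atLeastLessThanSuc_atLeastAtMost)
  then have "0 < sort (map u [1..<K+1]) ! 0" using assms(3) by auto
  then have "ln (sort (map u [1..<K+1]) ! 0) \<le> ln (u 1)" using le_u1 by simp
  then have "(- 2 * ln (u 1) - A 1) / B 1 \<le> (- 2 * (\<Sum>i<1. ln (sort (map u [1..<K+1]) ! i)) - A 1) / B 1"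
    using assms(2) by (simp add: divide_right_mono)
  also have "\<dots> \<le> TA K A B u" using assms(1) by (intro TA_term_le_TA) simp
  finally show ?thesis .
qed

lemma sum_ln_le_of_TA_ge:
  assumes "1 \<le> K" "\<And>i. i \<in> {1..K} \<Longrightarrow> 0 < u i \<and> u i \<le> 1"
    and "\<And>j. j \<in> {1..K} \<Longrightarrow> 0 < B j \<and> B 1 \<le> B j"
    and "0 \<le> t" "t \<le> TA K A B u"
  shows "2 * (\<Sum>i=1..K. ln (u i)) \<le> - (Min (A ` {1..K}) + B 1 * t)"
proof -
  obtain j where j: "j \<in> {1..K}"
    "TA K A B u = (- 2 * (\<Sum>i<j. ln (sort (map u [1..<K+1]) ! i)) - A j) / B j"
    using TA_eq_term[OF assms(1)] by blast
  have "B j * t \<le> - 2 * (\<Sum>i<j. ln (sort (map u [1..<K+1]) ! i)) - A j"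
    using assms(3,5) j by (simp add: field_simps)
  moreover have "B 1 * t \<le> B j * t" using assms(3,4) j(1) by (simp add: mult_right_mono)
  moreover have "(\<Sum>i=1..K. ln (u i)) \<le> (\<Sum>i<j. ln (sort (map u [1..<K+1]) ! i))"
    using sum_le_sum_sorted_prefix[where j=j and h=ln and u=u, OF upt_indices(1), unfolded upt_indices] assms(2) j(1)
    by simp
  moreover have "Min (A ` {1..K}) \<le> A j" using j(1) by simp
  ultimately show ?thesis by linarith
qed

lemma TA_measurable:
  assumes "\<And>i. i \<in> {1..K} \<Longrightarrow> (\<lambda>u. u i) \<in> borel_measurable M"
  shows "TA K A B \<in> borel_measurable M"
proof -
  have "(\<lambda>u. sort (map u [1..<K+1]) ! i) \<in> borel_measurable M" if "i < K" for i
  proof -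
    have sort_eq: "sort (map u [1..<K+1]) ! i
        = Min ((\<lambda>J. Max (u ` J)) ` {J. J \<subseteq> {1..K} \<and> card J = Suc i})" for u
      using sort_nth_eq_Min_Max[where i=i, OF upt_indices(1)[of K], unfolded upt_indices] that .
    show ?thesis
      unfolding sort_eq using assms
      by (intro borel_measurable_Min borel_measurable_Max finite_subsets_card)
        (auto intro: finite_subset)
  qed
  then show ?thesis
    unfolding TA_def[abs_def]
    by (intro borel_measurable_Max borel_measurable_divide borel_measurable_diff
        borel_measurable_times borel_measurable_sum borel_measurable_ln) auto
qed

section \<open>The null distribution\<close>

abbreviation unif01 :: "real measure" where
  "unif01 \<equiv> uniform_measure lborel {0<..<1}"

lemma prob_space_unif01: "prob_space unif01"
  by (rule prob_space_uniform_measure) simp_all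

lemma measure_unif01_Ioc:
  assumes "0 \<le> s" "s \<le> 1"
  shows "measure unif01 {0<..s} = s"
proof -
  have "{0<..<1} \<inter> {0<..s} = (if s = 1 then {0<..<1} else {0<..s::real})"
    using assms by auto
  then show ?thesis using assms by (simp add: measure_def divide_ennreal_def)
qed

lemma nn_integral_unif01_powr:
  assumes "0 \<le> b" "b < 1"
  shows "(\<integral>\<^sup>+x. ennreal (x powr - b) \<partial>unif01) = ennreal (1 / (1 - b))"
proof -
  have "((\<lambda>x::real. x powr - b) has_integral 1 / (1 - b)) {0<..<1}"
    using has_integral_powr_from_0[of "- b" 1] assms by (simp add: has_integral_Icc_iff_Ioo)
  then have "(\<integral>\<^sup>+x. ennreal (x powr - b) * indicator {0<..<1} x \<partial>lborel) = ennreal (1 / (1 - b))"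
    by (intro nn_integral_has_integral_lebesgue') auto
  then show ?thesis by (simp add: nn_integral_uniform_measure divide_ennreal_def)
qed

lemma prob_space_null_pvals: "prob_space (null_pvals K)"
  unfolding null_pvals_def by (intro prob_space_PiM prob_space_unif01)

lemma measurable_null_pvals_component:
  "i \<in> {1..K} \<Longrightarrow> (\<lambda>u. u i) \<in> measurable (null_pvals K) unif01"
  unfolding null_pvals_def by (rule measurable_component_singleton)

lemma borel_measurable_null_pvals_component:
  "i \<in> {1..K} \<Longrightarrow> (\<lambda>u. u i) \<in> borel_measurable (null_pvals K)"
  using measurable_null_pvals_component by (simp cong: measurable_cong_sets)

lemma AE_null_pvals_unit: "AE u in null_pvals K. \<forall>i\<in>{1..K}. u i \<in> {0<..<1}"
  unfolding null_pvals_def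
  by (intro eventually_ball_finite ballI AE_PiM_component prob_space_unif01 AE_uniform_measureI) auto

lemma measure_null_pvals_component:
  assumes "i \<in> {1..K}" "X \<in> sets borel"
  shows "measure (null_pvals K) {u \<in> space (null_pvals K). u i \<in> X} = measure unif01 X"
proof -
  have "measure unif01 X = measure (distr (null_pvals K) unif01 (\<lambda>u. u i)) X"
    unfolding null_pvals_def using distr_PiM_component[of "{1..K}" "\<lambda>_. unif01" i] assms(1)
    by (simp add: prob_space_unif01)
  also have "\<dots> = measure (null_pvals K) ((\<lambda>u. u i) -` X \<inter> space (null_pvals K))"
    using assms by (intro measure_distr measurable_null_pvals_component) auto
  finally show ?thesis by (simp add: vimage_def Int_def conj_commute)
qed

lemma nn_integral_null_pvals_prod:
  assumes "f \<in> borel_measurable borel"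
  shows "(\<integral>\<^sup>+u. (\<Prod>i\<in>{1..K}. f (u i)) \<partial>null_pvals K) = (\<integral>\<^sup>+x. f x \<partial>unif01) ^ K"
proof -
  interpret product_sigma_finite "\<lambda>_::nat. unif01"
    by (simp add: product_sigma_finite_def prob_space_unif01 prob_space_imp_sigma_finite)
  have "f \<in> borel_measurable unif01" using assms by (simp cong: measurable_cong_sets)
  then have "(\<integral>\<^sup>+u. (\<Prod>i\<in>{1..K}. f (u i)) \<partial>PiM {1..K} (\<lambda>_. unif01))
      = (\<Prod>i\<in>{1..K}. \<integral>\<^sup>+x. f x \<partial>unif01)"
    by (intro product_nn_integral_prod) auto
  then show ?thesis unfolding null_pvals_def by simp
qed

lemma exp_le_prod_powr:
  fixes u :: "'a \<Rightarrow> real"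
  assumes "finite I" "0 \<le> b" "\<And>i. i \<in> I \<Longrightarrow> 0 < u i" "(\<Sum>i\<in>I. ln (u i)) \<le> - L"
  shows "exp (b * L) \<le> (\<Prod>i\<in>I. u i powr - b)"
proof -
  have "exp (b * L) \<le> exp (b * - (\<Sum>i\<in>I. ln (u i)))"
    using mult_left_mono[of L "- (\<Sum>i\<in>I. ln (u i))" b] assms(2,4) by simp
  also have "\<dots> = exp (\<Sum>i\<in>I. - b * ln (u i))"
    by (simp add: sum_distrib_left sum_negf)
  also have "\<dots> = (\<Prod>i\<in>I. u i powr - b)"
    using assms(1,3) by (simp add: exp_sum powr_def less_imp_neq[THEN not_sym])
  finally show ?thesis .
qed

lemma AE_indicator_sum_ln_tail_le:
  assumes "1 < L"
  shows "AE u in null_pvals K.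
           indicator {u \<in> space (null_pvals K). (\<Sum>i=1..K. ln (u i)) \<le> - L} u
             \<le> ennreal (exp (1 - L)) * (\<Prod>i\<in>{1..K}. ennreal (u i powr - (1 - 1 / L)))"
  using AE_null_pvals_unit
proof eventually_elim
  case (elim u)
  show ?case
  proof (cases "u \<in> {u \<in> space (null_pvals K). (\<Sum>i=1..K. ln (u i)) \<le> - L}")
    case True
    have "exp ((1 - 1 / L) * L) \<le> (\<Prod>i\<in>{1..K}. u i powr - (1 - 1 / L))"
      using True elim assms by (intro exp_le_prod_powr) auto
    moreover have "(1 - 1 / L) * L = L - 1" using assms by (simp add: field_simps)
    ultimately have "exp (L - 1) \<le> (\<Prod>i\<in>{1..K}. u i powr - (1 - 1 / L))" by simp
    then have "1 \<le> exp (1 - L) * (\<Prod>i\<in>{1..K}. u i powr - (1 - 1 / L))"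
      by (simp add: exp_diff field_simps)
    then show ?thesis using True by (simp add: prod_ennreal ennreal_mult'[symmetric])
  qed simp
qed

lemma null_pvals_sum_ln_tail:
  assumes "1 < L"
  shows "measure (null_pvals K) {u \<in> space (null_pvals K). (\<Sum>i=1..K. ln (u i)) \<le> - L}
           \<le> exp (1 - L) * L ^ K"
proof -
  interpret prob_space "null_pvals K" by (rule prob_space_null_pvals)
  define b where "b = 1 - 1 / L"
  have b: "0 \<le> b" "b < 1" "1 / (1 - b) = L"
    using assms by (auto simp: b_def field_simps)
  define S where "S = {u \<in> space (null_pvals K). (\<Sum>i=1..K. ln (u i)) \<le> - L}"
  have S_sets: "S \<in> sets (null_pvals K)"
    unfolding S_def
    by (intro borel_measurable_le borel_measurable_sum borel_measurable_ln
        borel_measurable_null_pvals_component borel_measurable_const) auto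
  \<comment> \<open>Chernoff bound with exponent b: the weight exp(1 - L) * (prod u_i) powr (-b) is at least 1
     on S, and each factor u powr (-b) has mean 1 / (1 - b) = L under the uniform law.\<close>
  have "emeasure (null_pvals K) S
      \<le> (\<integral>\<^sup>+u. ennreal (exp (1 - L)) * (\<Prod>i\<in>{1..K}. ennreal (u i powr - b)) \<partial>null_pvals K)"
    unfolding nn_integral_indicator[OF S_sets, symmetric]
    using AE_indicator_sum_ln_tail_le[OF assms, of K, folded b_def S_def] by (rule nn_integral_mono_AE)
  also have "\<dots> = ennreal (exp (1 - L)) * (\<integral>\<^sup>+u. (\<Prod>i\<in>{1..K}. ennreal (u i powr - b)) \<partial>null_pvals K)"
  proof (rule nn_integral_cmult)
    have "(\<lambda>x::real. ennreal (x powr - b)) \<in> borel_measurable borel" by simp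
    then show "(\<lambda>u. \<Prod>i\<in>{1..K}. ennreal (u i powr - b)) \<in> borel_measurable (null_pvals K)"
      using measurable_compose[OF borel_measurable_null_pvals_component]
      by (intro borel_measurable_prod_ennreal) blast
  qed
  also have "\<dots> = ennreal (exp (1 - L)) * ennreal L ^ K"
    using nn_integral_null_pvals_prod[of "\<lambda>x. ennreal (x powr - b)" K]
      nn_integral_unif01_powr[OF b(1,2)] b(3) by simp
  also have "\<dots> = ennreal (exp (1 - L) * L ^ K)"
    using assms by (simp add: ennreal_mult ennreal_power)
  finally have "ennreal (measure (null_pvals K) S) \<le> ennreal (exp (1 - L) * L ^ K)"
    by (simp only: emeasure_eq_measure)
  moreover have "0 \<le> exp (1 - L) * L ^ K" using assms by simp
  ultimately show ?thesis unfolding S_def[symmetric] by (simp only: ennreal_le_iff)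
qed

lemma TA_pvalue_ge:
  assumes "1 \<le> K" "0 < B 1" "0 < s" "s \<le> 1" "t \<le> (- 2 * ln s - A 1) / B 1"
  shows "s \<le> TA_pvalue K A B t"
proof -
  interpret prob_space "null_pvals K" by (rule prob_space_null_pvals)
  have [measurable]: "TA K A B \<in> borel_measurable (null_pvals K)"
    by (intro TA_measurable borel_measurable_null_pvals_component)
  have "s = measure (null_pvals K) {u \<in> space (null_pvals K). u 1 \<in> {0<..s}}"
    using measure_null_pvals_component[of 1 K "{0<..s}"] measure_unif01_Ioc[of s] assms by simp
  also have "\<dots> \<le> TA_pvalue K A B t"
    unfolding TA_pvalue_def
  proof (rule finite_measure_mono_AE)
    show "AE u in null_pvals K. u \<in> {u \<in> space (null_pvals K). u 1 \<in> {0<..s}}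
        \<longrightarrow> u \<in> {u \<in> space (null_pvals K). t \<le> TA K A B u}"
      using AE_null_pvals_unit
    proof eventually_elim
      case (elim u)
      show ?case
      proof
        assume u: "u \<in> {u \<in> space (null_pvals K). u 1 \<in> {0<..s}}"
        then have "ln (u 1) \<le> ln s" by auto
        then have "(- 2 * ln s - A 1) / B 1 \<le> (- 2 * ln (u 1) - A 1) / B 1"
          using assms(2) by (simp add: divide_right_mono)
        then have "t \<le> (- 2 * ln (u 1) - A 1) / B 1" using assms(5) by linarith
        also have "\<dots> \<le> TA K A B u"
          using elim assms(1,2) by (intro TA_ge_smallest_first) auto
        finally show "u \<in> {u \<in> space (null_pvals K). t \<le> TA K A B u}" using u by simp
      qed
    qed
  qed measurable
  finally show ?thesis .
qed

lemma TA_pvalue_le: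
  assumes "1 \<le> K" "\<And>j. j \<in> {1..K} \<Longrightarrow> 0 < B j \<and> B 1 \<le> B j" "0 \<le> t"
    and "1 < (Min (A ` {1..K}) + B 1 * t) / 2"
  shows "TA_pvalue K A B t
           \<le> exp (1 - (Min (A ` {1..K}) + B 1 * t) / 2) * ((Min (A ` {1..K}) + B 1 * t) / 2) ^ K"
proof -
  interpret prob_space "null_pvals K" by (rule prob_space_null_pvals)
  define L where "L = (Min (A ` {1..K}) + B 1 * t) / 2"
  have "TA_pvalue K A B t \<le> measure (null_pvals K) {u \<in> space (null_pvals K). (\<Sum>i=1..K. ln (u i)) \<le> - L}"
    unfolding TA_pvalue_def
  proof (rule finite_measure_mono_AE)
    show "AE u in null_pvals K. u \<in> {u \<in> space (null_pvals K). t \<le> TA K A B u}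
        \<longrightarrow> u \<in> {u \<in> space (null_pvals K). (\<Sum>i=1..K. ln (u i)) \<le> - L}"
      using AE_null_pvals_unit
    proof eventually_elim
      case (elim u)
      show ?case
      proof
        assume u: "u \<in> {u \<in> space (null_pvals K). t \<le> TA K A B u}"
        have "2 * (\<Sum>i=1..K. ln (u i)) \<le> - (Min (A ` {1..K}) + B 1 * t)"
          using elim u assms(1-3) by (intro sum_ln_le_of_TA_ge) (auto simp: less_imp_le)
        then have "(\<Sum>i=1..K. ln (u i)) \<le> - L" unfolding L_def by (simp add: field_simps)
        then show "u \<in> {u \<in> space (null_pvals K). (\<Sum>i=1..K. ln (u i)) \<le> - L}"
          using u by simp
      qed
    qed
  qed (intro borel_measurable_le borel_measurable_sum borel_measurable_ln
        borel_measurable_null_pvals_component borel_measurable_const; simp)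
  also have "\<dots> \<le> exp (1 - L) * L ^ K"
    using assms(4) unfolding L_def by (intro null_pvals_sum_ln_tail)
  finally show ?thesis unfolding L_def .
qed

lemma neg_log_TA_pvalue_bounds:
  assumes "1 \<le> K" "\<And>j. j \<in> {1..K} \<Longrightarrow> 0 < B j \<and> B 1 \<le> B j"
    and "0 \<le> t" "0 \<le> A 1 + B 1 * t" "L = (Min (A ` {1..K}) + B 1 * t) / 2" "1 < L"
  shows "- 2 * (1 - L + K * ln L) \<le> - 2 * ln (TA_pvalue K A B t)"
    and "- 2 * ln (TA_pvalue K A B t) \<le> A 1 + B 1 * t"
proof -
  have "0 < B 1" using assms(1,2) by auto
  then have pv_ge: "exp (- (A 1 + B 1 * t) / 2) \<le> TA_pvalue K A B t"
    using assms(1,4) by (intro TA_pvalue_ge) (auto simp: field_simps)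
  then have pos: "0 < TA_pvalue K A B t" by (rule less_le_trans[OF exp_gt_zero])
  have "- (A 1 + B 1 * t) / 2 \<le> ln (TA_pvalue K A B t)"
    using pv_ge pos by (metis ln_exp ln_le_cancel_iff exp_gt_zero)
  then show "- 2 * ln (TA_pvalue K A B t) \<le> A 1 + B 1 * t" by simp
  have "TA_pvalue K A B t \<le> exp (1 - L) * L ^ K"
    using assms unfolding assms(5) by (intro TA_pvalue_le) auto
  then have "ln (TA_pvalue K A B t) \<le> ln (exp (1 - L) * L ^ K)"
    using pos assms(6) by simp
  also have "\<dots> = 1 - L + K * ln L"
    using assms(6) by (simp add: ln_mult ln_realpow)
  finally show "- 2 * (1 - L + K * ln L) \<le> - 2 * ln (TA_pvalue K A B t)" by simp
qed

lemma TA_pvalue_log_rate: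
  assumes "1 \<le> K" "\<And>j. j \<in> {1..K} \<Longrightarrow> 0 < B j \<and> B 1 \<le> B j"
  shows "((\<lambda>t. - 2 * ln (TA_pvalue K A B t) / t) \<longlongrightarrow> B 1) at_top"
proof -
  define a where "a = Min (A ` {1..K})"
  define L where "L t = (a + B 1 * t) / 2" for t
  have B1: "0 < B 1" using assms by auto
  have large: "\<forall>\<^sub>F t in at_top. 0 < t \<and> 0 \<le> A 1 + B 1 * t \<and> 1 < L t"
    unfolding L_def using B1 by (intro eventually_conj; real_asymp)
  have bounds: "\<forall>\<^sub>F t in at_top. - 2 * (1 - L t + K * ln (L t)) / t \<le> - 2 * ln (TA_pvalue K A B t) / t
      \<and> - 2 * ln (TA_pvalue K A B t) / t \<le> (A 1 + B 1 * t) / t"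
    using large
  proof eventually_elim
    case (elim t)
    have "L t = (Min (A ` {1..K}) + B 1 * t) / 2" unfolding L_def a_def ..
    note bounds = neg_log_TA_pvalue_bounds[where A=A and B=B and K=K, OF assms _ _ this]
    have "- 2 * (1 - L t + K * ln (L t)) \<le> - 2 * ln (TA_pvalue K A B t)"
      and "- 2 * ln (TA_pvalue K A B t) \<le> A 1 + B 1 * t"
      using bounds elim by auto
    then show ?case using elim by (intro conjI divide_right_mono) auto
  qed
  show ?thesis
  proof (rule tendsto_sandwich)
    show "\<forall>\<^sub>F t in at_top. - 2 * (1 - L t + K * ln (L t)) / t \<le> - 2 * ln (TA_pvalue K A B t) / t"
      using bounds by (rule eventually_mono) blast
    show "\<forall>\<^sub>F t in at_top. - 2 * ln (TA_pvalue K A B t) / t \<le> (A 1 + B 1 * t) / t"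
      using bounds by (rule eventually_mono) blast
    show "((\<lambda>t. - 2 * (1 - L t + K * ln (L t)) / t) \<longlongrightarrow> B 1) at_top"
      unfolding L_def using B1 by real_asymp
    show "((\<lambda>t. (A 1 + B 1 * t) / t) \<longlongrightarrow> B 1) at_top"
      using B1 by real_asymp
  qed
qed

section \<open>Asymptotics under the alternative\<close>

lemma tendsto_Max_image:
  fixes f :: "'i \<Rightarrow> 'a \<Rightarrow> 'b::linorder_topology"
  assumes "finite I" "I \<noteq> {}" "\<And>i. i \<in> I \<Longrightarrow> ((\<lambda>x. f i x) \<longlongrightarrow> l i) F"
  shows "((\<lambda>x. Max ((\<lambda>i. f i x) ` I)) \<longlongrightarrow> Max (l ` I)) F"
  using assms
proof (induction I rule: finite_ne_induct)
  case (singleton i)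
  then show ?case by simp
next
  case (insert i I)
  then show ?case by (simp add: tendsto_max)
qed

lemma filterlim_at_top_of_ratio:
  fixes X n :: "'a \<Rightarrow> real"
  assumes "((\<lambda>m. X m / n m) \<longlongrightarrow> r) F" "0 < r" "filterlim n at_top F"
  shows "filterlim X at_top F"
proof -
  have "filterlim (\<lambda>m. X m / n m * n m) at_top F"
    using filterlim_tendsto_pos_mult_at_top[OF assms] .
  moreover have "\<forall>\<^sub>F m in F. 0 < n m" using assms(3) filterlim_at_top_dense by blast
  then have "\<forall>\<^sub>F m in F. X m / n m * n m = X m" by eventually_elim simp
  ultimately show ?thesis by (rule filterlim_cong[THEN iffD1, OF refl refl, rotated])
qed

lemma tendsto_rescale_compose:
  fixes f s :: "'b \<Rightarrow> real" and X :: "'a \<Rightarrow> 'b" and n :: "'a \<Rightarrow> real"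
  assumes "((\<lambda>x. f x / s x) \<longlongrightarrow> c) G" "filterlim X G F"
    and "((\<lambda>m. s (X m) / n m) \<longlongrightarrow> r) F" "\<forall>\<^sub>F m in F. s (X m) \<noteq> 0"
  shows "((\<lambda>m. f (X m) / n m) \<longlongrightarrow> c * r) F"
proof -
  have "((\<lambda>m. f (X m) / s (X m) * (s (X m) / n m)) \<longlongrightarrow> c * r) F"
    using filterlim_compose[OF assms(1,2)] assms(3) by (rule tendsto_mult)
  moreover have "\<forall>\<^sub>F m in F. f (X m) / s (X m) * (s (X m) / n m) = f (X m) / n m"
    using assms(4) by eventually_elim simp
  ultimately show ?thesis by (rule Lim_transform_eventually)
qed

lemma Max_sum_subsets_antimono:
  fixes a :: "nat \<Rightarrow> 'b::{ordered_comm_monoid_add, linorder}"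
  assumes "antimono_on {1..K} a" "j \<le> K"
  shows "Max ((\<lambda>J. \<Sum>i\<in>J. a i) ` {J. J \<subseteq> {1..K} \<and> card J = j}) = (\<Sum>i=1..j. a i)"
proof -
  have sorted_id: "sort (map (\<lambda>i. i) [1..<K+1]) = [1..<K+1]" by (simp del: upt_Suc)
  have "Max ((\<lambda>J. \<Sum>i\<in>J. a i) ` {J. J \<subseteq> {1..K} \<and> card J = j})
      = (\<Sum>i<j. a (sort (map (\<lambda>i. i) [1..<K+1]) ! i))"
    using sum_sorted_prefix_eq_Max[where u="\<lambda>i. i" and h=a, OF upt_indices(1),
        unfolded upt_indices image_ident] assms by simp
  also have "\<dots> = (\<Sum>i<j. a (Suc i))"
    unfolding sorted_id using assms(2) by (intro sum.cong) (auto simp del: upt_Suc)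
  finally show ?thesis by (simp add: sum_bounds_lt_plus1)
qed

lemma sorted_prefix_ln_div_tendsto:
  fixes u :: "nat \<Rightarrow> nat \<Rightarrow> real" and n :: "nat \<Rightarrow> real"
  assumes "j \<le> K" "\<And>m i. i \<in> {1..K} \<Longrightarrow> 0 < u m i"
    and "\<And>i. i \<in> {1..K} \<Longrightarrow> (\<lambda>m. - 2 * ln (u m i) / n m) \<longlonglongrightarrow> a i"
    and "antimono_on {1..K} a" "\<forall>\<^sub>F m in sequentially. 0 < n m"
  shows "(\<lambda>m. - 2 * (\<Sum>i<j. ln (sort (map (u m) [1..<K+1]) ! i)) / n m) \<longlonglongrightarrow> (\<Sum>i=1..j. a i)"
proof -
  let ?subsets = "{J. J \<subseteq> {1..K} \<and> card J = j}"
  have "(\<lambda>m. Max ((\<lambda>J. \<Sum>i\<in>J. - 2 * ln (u m i) / n m) ` ?subsets))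
      \<longlonglongrightarrow> Max ((\<lambda>J. \<Sum>i\<in>J. a i) ` ?subsets)"
  proof (rule tendsto_Max_image)
    have "{1..j} \<in> ?subsets" using assms(1) by auto
    then show "?subsets \<noteq> {}" by blast
  qed (use assms(3) in \<open>auto simp: finite_subsets_card intro!: tendsto_sum\<close>)
  moreover have "\<forall>\<^sub>F m in sequentially.
      Max ((\<lambda>J. \<Sum>i\<in>J. - 2 * ln (u m i) / n m) ` ?subsets)
        = - 2 * (\<Sum>i<j. ln (sort (map (u m) [1..<K+1]) ! i)) / n m"
    using assms(5)
  proof eventually_elim
    case (elim m)
    have "antimono_on (u m ` {1..K}) (\<lambda>y. - 2 * ln y / n m)"
      using elim assms(2) by (intro monotone_onI) (auto intro: divide_right_mono)
    then have "(\<Sum>i<j. - 2 * ln (sort (map (u m) [1..<K+1]) ! i) / n m)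
        = Max ((\<lambda>J. \<Sum>i\<in>J. - 2 * ln (u m i) / n m) ` ?subsets)"
      using sum_sorted_prefix_eq_Max[OF upt_indices(1), unfolded upt_indices] assms(1) by simp
    then show ?case by (simp add: sum_distrib_left sum_divide_distrib)
  qed
  ultimately show ?thesis
    using Max_sum_subsets_antimono[OF assms(4,1)] by (simp add: Lim_transform_eventually)
qed

lemma TA_div_tendsto:
  fixes u :: "nat \<Rightarrow> nat \<Rightarrow> real" and n :: "nat \<Rightarrow> real"
  assumes "1 \<le> K" "\<And>m i. i \<in> {1..K} \<Longrightarrow> 0 < u m i"
    and "\<And>i. i \<in> {1..K} \<Longrightarrow> (\<lambda>m. - 2 * ln (u m i) / n m) \<longlonglongrightarrow> a i"
    and "antimono_on {1..K} a" "filterlim n at_top sequentially"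
  shows "(\<lambda>m. TA K A B (u m) / n m) \<longlonglongrightarrow> Max ((\<lambda>j. (\<Sum>i=1..j. a i) / B j) ` {1..K})"
proof -
  define S where "S m j = - 2 * (\<Sum>i<j. ln (sort (map (u m) [1..<K+1]) ! i))" for m j
  have n_pos: "\<forall>\<^sub>F m in sequentially. 0 < n m" using assms(5) filterlim_at_top_dense by blast
  have A_vanish: "(\<lambda>m. A j / n m) \<longlonglongrightarrow> 0" for j
    by (rule tendsto_divide_0[OF tendsto_const filterlim_at_top_imp_at_infinity[OF assms(5)]])
  have "(\<lambda>m. (S m j / n m - A j / n m) / B j) \<longlonglongrightarrow> ((\<Sum>i=1..j. a i) - 0) / B j"
    if "j \<in> {1..K}" for j
  proof -
    have "(\<lambda>m. S m j / n m) \<longlonglongrightarrow> (\<Sum>i=1..j. a i)"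
      using sorted_prefix_ln_div_tendsto[of j K u n a, folded S_def] that assms(2-4) n_pos by simp
    from tendsto_mult_right[OF tendsto_diff[OF this A_vanish], where c="inverse (B j)"]
    show ?thesis by (simp add: divide_inverse)
  qed
  then have "(\<lambda>m. Max ((\<lambda>j. (S m j / n m - A j / n m) / B j) ` {1..K}))
      \<longlonglongrightarrow> Max ((\<lambda>j. ((\<Sum>i=1..j. a i) - 0) / B j) ` {1..K})"
    using assms(1) by (intro tendsto_Max_image) auto
  moreover have "\<forall>\<^sub>F m in sequentially.
      Max ((\<lambda>j. (S m j / n m - A j / n m) / B j) ` {1..K}) = TA K A B (u m) / n m"
    using n_pos
  proof eventually_elim
    case (elim m)
    have "TA K A B (u m) / n m = Max ((\<lambda>y. y / n m) ` (\<lambda>j. (S m j - A j) / B j) ` {1..K})"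
      unfolding TA_def S_def using elim assms(1)
      by (intro mono_Max_commute monoI divide_right_mono) auto
    also have "\<dots> = Max ((\<lambda>j. (S m j / n m - A j / n m) / B j) ` {1..K})"
      unfolding image_image by (simp add: diff_divide_distrib mult.commute)
    finally show ?case by simp
  qed
  ultimately have "(\<lambda>m. TA K A B (u m) / n m)
      \<longlonglongrightarrow> Max ((\<lambda>j. ((\<Sum>i=1..j. a i) - 0) / B j) ` {1..K})"
    by (rule Lim_transform_eventually)
  then show ?thesis by simp
qed

section \<open>The exact slope\<close>

lemma Max_image_eq_Max_prefix:
  fixes g :: "nat \<Rightarrow> 'a::linorder"
  assumes "1 \<le> l" "l \<le> K" "\<And>j. j \<in> {l..K} \<Longrightarrow> g j \<le> g l"
  shows "Max (g ` {1..K}) = Max (g ` {1..l})"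
proof (rule antisym)
  show "Max (g ` {1..K}) \<le> Max (g ` {1..l})"
  proof (rule Max.boundedI)
    fix y assume "y \<in> g ` {1..K}"
    then obtain j where j: "j \<in> {1..K}" "y = g j" by blast
    show "y \<le> Max (g ` {1..l})"
    proof (cases "j \<le> l")
      case True
      then show ?thesis using j by (intro Max_ge) auto
    next
      case False
      then have "y \<le> g l" using j assms(3) by auto
      also have "\<dots> \<le> Max (g ` {1..l})" using assms(1) by (intro Max_ge) auto
      finally show ?thesis .
    qed
  qed (use assms(1,2) in auto)
qed (use assms(1,2) in \<open>auto intro: Max_mono\<close>)

lemma scaled_partial_sum_lt_sum:
  fixes a B :: "nat \<Rightarrow> real"
  assumes "1 < l" "j \<in> {1..l}" "\<And>i. i \<in> {1..l} \<Longrightarrow> 0 < a i"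
    and "\<And>j. j \<in> {1..l} \<Longrightarrow> 0 < B j" "strict_mono_on {1..l} B"
  shows "B 1 / B j * (\<Sum>i=1..j. a i) < (\<Sum>i=1..l. a i)"
proof (cases "j = l")
  case True
  have "B 1 < B l" using assms(1) by (intro strict_mono_onD[OF assms(5)]) auto
  then have "B 1 / B l < 1" using assms(1,4) by simp
  moreover have "0 < (\<Sum>i=1..l. a i)" using assms(1,3) by (intro sum_pos) auto
  ultimately show ?thesis using True mult_strict_right_mono by fastforce
next
  case False
  have "B 1 \<le> B j" using assms(2) by (auto intro: strict_mono_on_leD[OF assms(5)])
  moreover have "0 \<le> (\<Sum>i=1..j. a i)" using assms(2,3) by (intro sum_nonneg) (auto simp: less_imp_le)
  moreover have "0 < B 1" "0 < B j" using assms(1,2,4) by auto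
  ultimately have "B 1 / B j * (\<Sum>i=1..j. a i) \<le> (\<Sum>i=1..j. a i)"
    by (intro mult_left_le_one_le) auto
  also have "\<dots> < (\<Sum>i=1..j. a i) + a l" using assms(1,3) by simp
  also have "\<dots> = (\<Sum>i\<in>insert l {1..j}. a i)" using False assms(2) by simp
  also have "\<dots> \<le> (\<Sum>i=1..l. a i)"
    using assms(1-3) by (intro sum_mono2) (auto simp: less_imp_le)
  finally show ?thesis .
qed

lemma Max_scaled_partial_sums_eq_sum_iff:
  fixes a B :: "nat \<Rightarrow> real"
  assumes "1 \<le> l" "\<And>i. i \<in> {1..l} \<Longrightarrow> 0 < a i"
    and "\<And>j. j \<in> {1..l} \<Longrightarrow> 0 < B j" "strict_mono_on {1..l} B"
  shows "Max ((\<lambda>j. B 1 / B j * (\<Sum>i=1..j. a i)) ` {1..l}) = (\<Sum>i=1..l. a i) \<longleftrightarrow> l = 1"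
proof
  assume max_eq: "Max ((\<lambda>j. B 1 / B j * (\<Sum>i=1..j. a i)) ` {1..l}) = (\<Sum>i=1..l. a i)"
  show "l = 1"
  proof (rule ccontr)
    assume "l \<noteq> 1"
    then have "1 < l" using assms(1) by simp
    have "Max ((\<lambda>j. B 1 / B j * (\<Sum>i=1..j. a i)) ` {1..l})
        \<in> (\<lambda>j. B 1 / B j * (\<Sum>i=1..j. a i)) ` {1..l}"
      using assms(1) by (intro Max_in finite_imageI) auto
    then obtain j where j: "j \<in> {1..l}"
      "Max ((\<lambda>j. B 1 / B j * (\<Sum>i=1..j. a i)) ` {1..l}) = B 1 / B j * (\<Sum>i=1..j. a i)"
      by blast
    have "B 1 / B j * (\<Sum>i=1..j. a i) < (\<Sum>i=1..l. a i)"
      using \<open>1 < l\<close> j(1) assms(2-4) by (intro scaled_partial_sum_lt_sum) auto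
    with j(2) max_eq show False by simp
  qed
next
  assume "l = 1"
  then show "Max ((\<lambda>j. B 1 / B j * (\<Sum>i=1..j. a i)) ` {1..l}) = (\<Sum>i=1..l. a i)"
    using assms(3)[of 1] by simp
qed

lemma Max_scaled_partial_sums_eq_prefix:
  fixes a B :: "nat \<Rightarrow> real"
  assumes "1 \<le> l" "l \<le> K" "\<And>i. i \<in> {1..l} \<Longrightarrow> 0 \<le> a i" "\<And>i. i \<in> {l<..K} \<Longrightarrow> a i = 0"
    and "\<And>j. j \<in> {1..K} \<Longrightarrow> 0 < B j" "mono_on {1..K} B"
  shows "B 1 * Max ((\<lambda>j. (\<Sum>i=1..j. a i) / B j) ` {1..K})
           = Max ((\<lambda>j. B 1 / B j * (\<Sum>i=1..j. a i)) ` {1..l})"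
proof -
  have B1: "0 < B 1" using assms(1,2,5) by auto
  have "B 1 * Max ((\<lambda>j. (\<Sum>i=1..j. a i) / B j) ` {1..K})
      = Max ((\<lambda>j. B 1 / B j * (\<Sum>i=1..j. a i)) ` {1..K})"
    using assms(1,2) B1
    by (subst mono_Max_commute[where f="\<lambda>y. B 1 * y"]) (auto intro: monoI simp: image_image)
  also have "\<dots> = Max ((\<lambda>j. B 1 / B j * (\<Sum>i=1..j. a i)) ` {1..l})"
  proof (rule Max_image_eq_Max_prefix[OF assms(1,2)])
    fix j assume j: "j \<in> {l..K}"
    have sum_eq: "(\<Sum>i=1..j. a i) = (\<Sum>i=1..l. a i)"
      using j assms(4) by (intro sum.mono_neutral_right) auto
    have "B l \<le> B j" "0 < B l" using j assms(1,5) by (auto intro: mono_onD[OF assms(6)])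
    then have "B 1 / B j \<le> B 1 / B l" using B1 by (intro divide_left_mono) auto
    moreover have "0 \<le> (\<Sum>i=1..l. a i)" using assms(3) by (intro sum_nonneg) auto
    ultimately show "B 1 / B j * (\<Sum>i=1..j. a i) \<le> B 1 / B l * (\<Sum>i=1..l. a i)"
      unfolding sum_eq by (rule mult_right_mono)
  qed
  finally show ?thesis .
qed

lemma tendsto_log_pvalue_rescaled:
  fixes p :: "nat \<Rightarrow> real" and N :: "nat \<Rightarrow> nat" and n :: "nat \<Rightarrow> real"
  assumes "(\<lambda>k. - 2 / real k * ln (p k)) \<longlonglongrightarrow> c"
    and "(\<lambda>m. real (N m) / n m) \<longlonglongrightarrow> r" "0 < r" "filterlim n at_top sequentially"
  shows "(\<lambda>m. - 2 * ln (p (N m)) / n m) \<longlonglongrightarrow> c * r"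
proof (rule tendsto_rescale_compose[where s=real])
  show "(\<lambda>k. - 2 * ln (p k) / real k) \<longlonglongrightarrow> c"
    using assms(1) by simp
  have N_top: "filterlim (\<lambda>m. real (N m)) at_top sequentially"
    by (rule filterlim_at_top_of_ratio[OF assms(2-4)])
  then show "filterlim N sequentially sequentially"
    by (simp add: filterlim_sequentially_iff_filterlim_real)
  have "\<forall>\<^sub>F m in sequentially. 0 < real (N m)" using N_top unfolding filterlim_at_top_dense by blast
  then show "\<forall>\<^sub>F m in sequentially. real (N m) \<noteq> 0" by (rule eventually_mono) simp
qed (fact assms(2))

lemma tendsto_TA_log_pvalue:
  fixes u :: "nat \<Rightarrow> nat \<Rightarrow> real" and n :: "nat \<Rightarrow> real"
  assumes "1 \<le> K" "\<And>j. j \<in> {1..K} \<Longrightarrow> 0 < B j \<and> B 1 \<le> B j"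
    and "\<And>m i. i \<in> {1..K} \<Longrightarrow> 0 < u m i"
    and "\<And>i. i \<in> {1..K} \<Longrightarrow> (\<lambda>m. - 2 * ln (u m i) / n m) \<longlonglongrightarrow> a i"
    and "antimono_on {1..K} a" "filterlim n at_top sequentially" "0 < a 1"
  shows "(\<lambda>m. - 2 / n m * ln (TA_pvalue K A B (TA K A B (u m))))
           \<longlonglongrightarrow> B 1 * Max ((\<lambda>j. (\<Sum>i=1..j. a i) / B j) ` {1..K})"
proof -
  have ratio: "(\<lambda>m. TA K A B (u m) / n m) \<longlonglongrightarrow> Max ((\<lambda>j. (\<Sum>i=1..j. a i) / B j) ` {1..K})"
    by (rule TA_div_tendsto[OF assms(1,3-6)])
  have "0 < (\<Sum>i=1..1. a i) / B 1" using assms(1,2,7) by simp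
  also have "\<dots> \<le> Max ((\<lambda>j. (\<Sum>i=1..j. a i) / B j) ` {1..K})"
    using assms(1) by (intro Max_ge) (auto intro!: image_eqI[where x=1])
  finally have TA_top: "filterlim (\<lambda>m. TA K A B (u m)) at_top sequentially"
    by (rule filterlim_at_top_of_ratio[OF ratio _ assms(6)])
  have "\<forall>\<^sub>F m in sequentially. 0 < TA K A B (u m)" using TA_top unfolding filterlim_at_top_dense by blast
  then have "\<forall>\<^sub>F m in sequentially. TA K A B (u m) \<noteq> 0" by (rule eventually_mono) simp
  from tendsto_rescale_compose[where s="\<lambda>t. t", OF TA_pvalue_log_rate[where A=A and B=B and K=K, OF assms(1,2)] TA_top ratio this]
  show ?thesis unfolding times_divide_eq_left .
qed

theorem theorem2:
  fixes M :: "'a measure"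
    and K l :: nat
    and P :: "nat \<Rightarrow> nat \<Rightarrow> 'a \<Rightarrow> real"
    and N :: "nat \<Rightarrow> nat \<Rightarrow> nat"
    and c lam A B :: "nat \<Rightarrow> real"
  defines "n \<equiv> (\<lambda>m. (\<Sum>i=1..K. real (N i m)) / real K)"
  assumes M: "prob_space M"
    and K: "1 \<le> K"
    and meas: "\<And>i k. i \<in> {1..K} \<Longrightarrow> P i k \<in> borel_measurable M"
    and pval: "\<And>i k \<omega>. i \<in> {1..K} \<Longrightarrow> \<omega> \<in> space M \<Longrightarrow> 0 < P i k \<omega> \<and> P i k \<omega> \<le> 1"
    and slope: "\<And>i. i \<in> {1..K} \<Longrightarrow>
        AE \<omega> in M. (\<lambda>k. - 2 / real k * ln (P i k \<omega>)) \<longlonglongrightarrow> c i"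
    and c_nonneg: "\<And>i. i \<in> {1..K} \<Longrightarrow> 0 \<le> c i"
    and n_lim: "filterlim n at_top sequentially"
    and ratio: "\<And>i. i \<in> {1..K} \<Longrightarrow> (\<lambda>m. real (N i m) / n m) \<longlonglongrightarrow> lam i"
    and lam_pos: "\<And>i. i \<in> {1..K} \<Longrightarrow> 0 < lam i"
    and lam_sum: "(\<Sum>i=1..K. lam i) = real K"
    and ordered: "\<And>i j. i \<in> {1..K} \<Longrightarrow> j \<in> {1..K} \<Longrightarrow> i \<le> j \<Longrightarrow> lam j * c j \<le> lam i * c i"
    and ell: "1 \<le> l" "l \<le> K"
    and c_pos: "\<And>i. i \<in> {1..K} \<Longrightarrow> (0 < c i \<longleftrightarrow> i \<le> l)"
    and B_pos: "\<And>j. j \<in> {1..K} \<Longrightarrow> 0 < B j"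
    and B_mono: "strict_mono_on {1..K} B"
    and no_ties: "inj_on (\<lambda>j. (\<Sum>i=1..j. lam i * c i) / B j) {1..K}"
  shows "\<exists>C. (AE \<omega> in M. (\<lambda>m. - 2 / n m * ln (TA_pvalue K A B (TA K A B (\<lambda>i. P i (N i m) \<omega>))))
              \<longlonglongrightarrow> C)
          \<and> C \<le> Max ((\<lambda>j. B 1 / B j * (\<Sum>i=1..j. lam i * c i)) ` {1..l})
          \<and> (C = (\<Sum>i=1..l. lam i * c i) \<longleftrightarrow> l = 1)"
proof -
  define a where "a i = lam i * c i" for i
  define D where "D = Max ((\<lambda>j. (\<Sum>i=1..j. a i) / B j) ` {1..K})"
  have B: "0 < B j \<and> B 1 \<le> B j" if "j \<in> {1..K}" for j
    using that B_pos K by (auto intro: strict_mono_on_leD[OF B_mono])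
  have a_pos: "0 < a i" if "i \<in> {1..l}" for i
    using that ell lam_pos[of i] c_pos[of i] unfolding a_def by simp
  have a_zero: "a i = 0" if "i \<in> {l<..K}" for i
    using that ell c_pos[of i] c_nonneg[of i] unfolding a_def by (simp add: less_le)
  have "AE \<omega> in M. \<forall>i\<in>{1..K}. (\<lambda>k. - 2 / real k * ln (P i k \<omega>)) \<longlonglongrightarrow> c i"
    using slope by (intro AE_finite_allI) auto
  then have "AE \<omega> in M. (\<lambda>m. - 2 / n m * ln (TA_pvalue K A B (TA K A B (\<lambda>i. P i (N i m) \<omega>))))
      \<longlonglongrightarrow> B 1 * D"
    using AE_space
  proof eventually_elim
    case (elim \<omega>)
    have "(\<lambda>m. - 2 * ln (P i (N i m) \<omega>) / n m) \<longlonglongrightarrow> a i" if i: "i \<in> {1..K}" for i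
      using tendsto_log_pvalue_rescaled[OF bspec[OF elim(1) i] ratio[OF i] lam_pos[OF i] n_lim]
      unfolding a_def by (simp add: mult.commute)
    then show ?case
      unfolding D_def using K B pval elim(2) ordered a_pos ell n_lim
      by (intro tendsto_TA_log_pvalue) (auto simp: a_def intro: monotone_onI)
  qed
  moreover have "B 1 * D = Max ((\<lambda>j. B 1 / B j * (\<Sum>i=1..j. a i)) ` {1..l})"
    unfolding D_def using ell a_pos a_zero B_pos strict_mono_on_imp_mono_on[OF B_mono]
    by (intro Max_scaled_partial_sums_eq_prefix) (auto simp: less_imp_le)
  moreover have "Max ((\<lambda>j. B 1 / B j * (\<Sum>i=1..j. a i)) ` {1..l}) = (\<Sum>i=1..l. a i) \<longleftrightarrow> l = 1"
    using ell B_pos a_pos by (intro Max_scaled_partial_sums_eq_sum_iff monotone_on_subset[OF B_mono]) auto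
  ultimately show ?thesis unfolding a_def by (intro exI[of _ "B 1 * D"]) simp
qed

end
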